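(* Let $v \sim \mathcal{N}(0, I_d)$, $p \ge 1$, $\alpha > 8$, and $r^2 = d + 2\sqrt{\alpha d} + 2\alpha$. Then for any fixed unit vector $s \in \mathbb{S}^{d-1}$, $$\mathbb{E}[|\langle v, s\rangle|^p \mid \|v\|^2 \ge r^2] \le (64 \alpha)^{p/2} + 4(8\alpha + 2p)^{p/2}.$$
   Context: $\|\cdot\|$ is the Euclidean norm and $\langle\cdot,\cdot\rangle$ the standard inner product on $\mathbb{R}^d$. *)

theory Defs
  imports "HOL-Probability.Probability"
begin

definition std_gaussian :: "'a::euclidean_space measure" where
  "std_gaussian = density lborel
     (\<lambda>x. ennreal ((2 * pi) powr (- real DIM('a) / 2) * exp (- (norm x)\<^sup>2 / 2)))"

definition cond_exp_event :: "'a measure \<Rightarrow> ('a \<Rightarrow> real) \<Rightarrow> 'a set \<Rightarrow> ennreal" where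
  "cond_exp_event M f A = (\<integral>\<^sup>+ x\<in>A. ennreal (f x) \<partial>M) / emeasure M A"

end

theory Submission
  imports Defs
begin

text \<open>
  Split \<open>|<v,s>|^p\<close> at the level \<open><v,s>^2 = 64 \<alpha>\<close>. Below the level the integrand is at most
  \<open>(64 \<alpha>)^(p/2)\<close>. Above it, bounding \<open>|y|^p\<close> by an exponential in \<open>|y|\<close> and using the
  Gaussian moment generating function gives
  \<open>E[|<v,s>|^p; <v,s>^2 > 64 \<alpha>] \<le> 2 (2p)^(p/2) exp (-24 \<alpha>)\<close>.
  So it suffices that \<open>P(|v|^2 \<ge> r^2) \<ge> exp (-24 \<alpha>) / 2\<close>. If \<open>d \<le> 16 \<alpha>\<close>, then
  \<open>r^2 \<le> 26 \<alpha>\<close>, and shifting the Gaussian by \<open>r s\<close> (Cameron--Martin) moves a slab of mass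
  \<open>1/4\<close> outside the ball of radius \<open>r\<close> at a density cost \<open>exp (-r^2/2 - 2r)\<close>. If
  \<open>d > 16 \<alpha>\<close>, dilating the Gaussian moves the Chernoff bulk
  \<open>d - 4 sqrt d < |v|^2 < d + 6 sqrt d\<close>, of mass \<open>1/2\<close>, beyond \<open>r^2\<close>, again at a cost
  of at least \<open>exp (-24 \<alpha>)\<close>.
\<close>

section \<open>Density, normalisation and changes of variables\<close>

lemma nn_integral_lborel_affine:
  fixes t :: "'a::euclidean_space" and f :: "'a \<Rightarrow> ennreal"
  assumes [measurable]: "f \<in> borel_measurable borel" and c: "c \<noteq> 0"
  shows "(\<integral>\<^sup>+x. f x \<partial>lborel) = ennreal (\<bar>c\<bar> ^ DIM('a)) * (\<integral>\<^sup>+x. f (t + c *\<^sub>R x) \<partial>lborel)"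
  by (subst lborel_affine[OF c, of t])
     (simp add: nn_integral_density nn_integral_distr nn_integral_cmult)

definition std_gaussian_density :: "'a::euclidean_space \<Rightarrow> real" where
  "std_gaussian_density x = (2 * pi) powr (- real DIM('a) / 2) * exp (- (norm x)\<^sup>2 / 2)"

lemma std_gaussian_density_pos: "0 < std_gaussian_density x"
  by (simp add: std_gaussian_density_def)

lemma borel_measurable_std_gaussian_density [measurable]:
  "std_gaussian_density \<in> borel_measurable borel"
  unfolding std_gaussian_density_def by measurable

lemma std_gaussian_eq_density:
  "std_gaussian = density lborel (\<lambda>x. ennreal (std_gaussian_density x))"
  by (simp add: std_gaussian_def std_gaussian_density_def)

lemma sets_std_gaussian [measurable_cong, simp]: "sets std_gaussian = sets borel"
  by (simp add: std_gaussian_eq_density)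

lemma space_std_gaussian [simp]: "space std_gaussian = UNIV"
  by (simp add: std_gaussian_eq_density)

lemma nn_integral_std_gaussian:
  assumes [measurable]: "f \<in> borel_measurable borel"
  shows "(\<integral>\<^sup>+x. f x \<partial>std_gaussian) = (\<integral>\<^sup>+x. ennreal (std_gaussian_density x) * f x \<partial>lborel)"
  unfolding std_gaussian_eq_density by (rule nn_integral_density) measurable

lemma std_gaussian_density_eq_prod:
  "std_gaussian_density (x::'a::euclidean_space) = (\<Prod>b\<in>Basis. std_normal_density (x \<bullet> b))"
proof -
  have norm_sq: "(norm x)\<^sup>2 = (\<Sum>b\<in>Basis. (x \<bullet> b)\<^sup>2)"
    unfolding power2_norm_eq_inner by (subst euclidean_inner) (simp add: power2_eq_square)
  have "(2 * pi) powr (- real DIM('a) / 2) = (1 / sqrt (2 * pi)) ^ DIM('a)"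
    by (simp add: powr_minus_divide powr_half_sqrt[symmetric] power_one_over powr_powr
        flip: powr_realpow)
  moreover have "(\<Prod>b\<in>Basis. exp (- (x \<bullet> b)\<^sup>2 / 2)) = exp (- (norm x)\<^sup>2 / 2)"
    by (simp add: norm_sq exp_sum[symmetric] sum_negf sum_divide_distrib)
  ultimately show ?thesis
    by (simp add: std_gaussian_density_def std_normal_density_def prod_dividef power_one_over)
qed

interpretation std_gaussian: prob_space "std_gaussian :: 'a::euclidean_space measure"
proof
  have "emeasure std_gaussian (UNIV :: 'a set)
      = (\<integral>\<^sup>+x. (\<Prod>b\<in>(Basis :: 'a set). ennreal (std_normal_density (x \<bullet> b))) \<partial>lborel)"
    unfolding std_gaussian_eq_density
    by (simp add: emeasure_density std_gaussian_density_eq_prod prod_ennreal)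
  also have "\<dots> = (\<Prod>b\<in>(Basis :: 'a set). \<integral>\<^sup>+x. ennreal (std_normal_density x) \<partial>lborel)"
    by (rule nn_integral_lborel_prod) auto
  also have "\<dots> = 1"
    by (simp add: nn_integral_eq_integral)
  finally show "emeasure std_gaussian (space (std_gaussian :: 'a measure)) = 1" by simp
qed

lemma std_gaussian_density_add:
  "std_gaussian_density (x + c) = std_gaussian_density x * exp (- (x \<bullet> c) - (norm c)\<^sup>2 / 2)"
proof -
  have "(norm (x + c))\<^sup>2 = (norm x)\<^sup>2 + 2 * (x \<bullet> c) + (norm c)\<^sup>2"
    by (simp add: power2_norm_eq_inner inner_add_left inner_add_right inner_commute)
  then show ?thesis
    by (simp add: std_gaussian_density_def mult_exp_exp field_simps)
qed

lemma std_gaussian_density_scaleR: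
  "std_gaussian_density (c *\<^sub>R x) = std_gaussian_density x * exp (- (c\<^sup>2 - 1) * (norm x)\<^sup>2 / 2)"
  by (simp add: std_gaussian_density_def mult_exp_exp power_mult_distrib field_simps)

lemma nn_integral_std_gaussian_shift:
  assumes [measurable]: "f \<in> borel_measurable borel"
  shows "(\<integral>\<^sup>+x. f x \<partial>std_gaussian)
       = (\<integral>\<^sup>+x. ennreal (exp (- (x \<bullet> c) - (norm c)\<^sup>2 / 2)) * f (x + c) \<partial>std_gaussian)"
proof -
  have "(\<integral>\<^sup>+x. f x \<partial>std_gaussian)
      = (\<integral>\<^sup>+x. ennreal (std_gaussian_density (c + x)) * f (c + x) \<partial>lborel)"
    using nn_integral_lborel_affine[of "\<lambda>x. ennreal (std_gaussian_density x) * f x" 1 c]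
    by (simp add: nn_integral_std_gaussian)
  also have "\<dots> = (\<integral>\<^sup>+x. ennreal (std_gaussian_density x)
      * (ennreal (exp (- (x \<bullet> c) - (norm c)\<^sup>2 / 2)) * f (x + c)) \<partial>lborel)"
    by (intro nn_integral_cong)
      (simp add: add.commute[of c] std_gaussian_density_add ennreal_mult mult.assoc
        std_gaussian_density_pos less_imp_le)
  finally show ?thesis
    by (simp add: nn_integral_std_gaussian)
qed

lemma nn_integral_std_gaussian_dilation:
  fixes f :: "'a::euclidean_space \<Rightarrow> ennreal"
  assumes [measurable]: "f \<in> borel_measurable borel" and c: "c > 0"
  shows "(\<integral>\<^sup>+x. f x \<partial>std_gaussian)
       = (\<integral>\<^sup>+x. ennreal (c ^ DIM('a) * exp (- (c\<^sup>2 - 1) * (norm x)\<^sup>2 / 2)) * f (c *\<^sub>R x) \<partial>std_gaussian)"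
proof -
  have "(\<integral>\<^sup>+x. f x \<partial>std_gaussian)
      = ennreal (c ^ DIM('a)) * (\<integral>\<^sup>+x. ennreal (std_gaussian_density (c *\<^sub>R x)) * f (c *\<^sub>R x) \<partial>lborel)"
    using nn_integral_lborel_affine[of "\<lambda>x. ennreal (std_gaussian_density x) * f x" c 0] c
    by (simp add: nn_integral_std_gaussian)
  also have "\<dots> = (\<integral>\<^sup>+x. ennreal (std_gaussian_density x)
      * (ennreal (c ^ DIM('a) * exp (- (c\<^sup>2 - 1) * (norm x)\<^sup>2 / 2)) * f (c *\<^sub>R x)) \<partial>lborel)"
    using c
    by (subst nn_integral_cmult[symmetric], measurable)
      (intro nn_integral_cong, simp add: std_gaussian_density_scaleR ennreal_mult mult_ac
        std_gaussian_density_pos less_imp_le)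
  finally show ?thesis
    by (simp add: nn_integral_std_gaussian)
qed

lemma nn_integral_std_gaussian_uminus:
  fixes f :: "'a::euclidean_space \<Rightarrow> ennreal"
  assumes [measurable]: "f \<in> borel_measurable borel"
  shows "(\<integral>\<^sup>+x. f (- x) \<partial>std_gaussian) = (\<integral>\<^sup>+x. f x \<partial>std_gaussian)"
  using nn_integral_lborel_affine[of "\<lambda>x. ennreal (std_gaussian_density x) * f x" "-1" 0]
  by (simp add: nn_integral_std_gaussian std_gaussian_density_def)

lemma nn_integral_std_gaussian_exp_inner:
  fixes c :: "'a::euclidean_space"
  shows "(\<integral>\<^sup>+x. ennreal (exp (x \<bullet> c)) \<partial>std_gaussian) = ennreal (exp ((norm c)\<^sup>2 / 2))"
proof -
  have "1 = (\<integral>\<^sup>+x. ennreal (exp (- (x \<bullet> - c) - (norm (- c))\<^sup>2 / 2)) \<partial>std_gaussian)"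
    using nn_integral_std_gaussian_shift[of "\<lambda>_. 1" "- c"] std_gaussian.emeasure_space_1[where 'a='a] by simp
  also have "\<dots> = ennreal (exp (- (norm c)\<^sup>2 / 2)) * (\<integral>\<^sup>+x. ennreal (exp (x \<bullet> c)) \<partial>std_gaussian)"
    by (subst nn_integral_cmult[symmetric]) (auto simp: ennreal_mult[symmetric] mult_exp_exp)
  finally have "ennreal (exp ((norm c)\<^sup>2 / 2))
      = ennreal (exp ((norm c)\<^sup>2 / 2)) * ennreal (exp (- (norm c)\<^sup>2 / 2))
        * (\<integral>\<^sup>+x. ennreal (exp (x \<bullet> c)) \<partial>std_gaussian)"
    by (simp add: mult.assoc)
  then show ?thesis
    by (simp add: ennreal_mult[symmetric] mult_exp_exp)
qed

lemma nn_integral_std_gaussian_exp_norm: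
  assumes "\<theta> < 1"
  shows "(\<integral>\<^sup>+x. ennreal (exp (\<theta> * (norm x)\<^sup>2 / 2)) \<partial>(std_gaussian :: 'a::euclidean_space measure))
       = ennreal ((1 - \<theta>) powr (- real DIM('a) / 2))"
proof -
  define c where "c = sqrt (1 - \<theta>)"
  have c: "c > 0" "c\<^sup>2 = 1 - \<theta>"
    using assms by (simp_all add: c_def)
  have "1 = (\<integral>\<^sup>+x. ennreal (c ^ DIM('a) * exp (\<theta> * (norm x)\<^sup>2 / 2)) \<partial>(std_gaussian :: 'a measure))"
    using nn_integral_std_gaussian_dilation[where 'a='a, of "\<lambda>_. 1" c] std_gaussian.emeasure_space_1[where 'a='a] c by simp
  also have "\<dots> = ennreal (c ^ DIM('a))
      * (\<integral>\<^sup>+x. ennreal (exp (\<theta> * (norm x)\<^sup>2 / 2)) \<partial>(std_gaussian :: 'a measure))"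
    using c by (subst nn_integral_cmult[symmetric]) (auto simp: ennreal_mult)
  finally have "ennreal ((1 - \<theta>) powr (- real DIM('a) / 2))
      = ennreal ((1 - \<theta>) powr (- real DIM('a) / 2) * c ^ DIM('a))
        * (\<integral>\<^sup>+x. ennreal (exp (\<theta> * (norm x)\<^sup>2 / 2)) \<partial>(std_gaussian :: 'a measure))"
    using c by (simp add: ennreal_mult mult.assoc)
  moreover have "(1 - \<theta>) powr (- real DIM('a) / 2) * c ^ DIM('a) = 1"
    using assms
    by (simp add: c_def powr_half_sqrt[symmetric] powr_powr powr_minus_divide
        flip: powr_realpow)
  ultimately show ?thesis
    by simp
qed

section \<open>Chernoff bounds\<close>

lemma exp_neg_two_le_quarter: "exp (-2::real) \<le> 1/4"
proof -
  have "(1 + 1)\<^sup>2 \<le> (exp (1::real))\<^sup>2"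
    by (intro power_mono exp_ge_add_one_self) simp
  then have "4 \<le> exp (2::real)"
    by (simp add: power2_eq_square flip: exp_add)
  then show ?thesis
    by (simp add: exp_minus field_simps)
qed

lemma emeasure_le_exp_mult_nn_integral:
  assumes [measurable]: "g \<in> borel_measurable M" and "0 \<le> l"
  shows "emeasure M {x \<in> space M. t \<le> g x}
       \<le> ennreal (exp (- l * t)) * (\<integral>\<^sup>+x. ennreal (exp (l * g x)) \<partial>M)"
proof -
  have "emeasure M {x \<in> space M. t \<le> g x} = (\<integral>\<^sup>+x. indicator {x \<in> space M. t \<le> g x} x \<partial>M)"
    by (simp add: nn_integral_indicator)
  also have "\<dots> \<le> (\<integral>\<^sup>+x. ennreal (exp (- l * t)) * ennreal (exp (l * g x)) \<partial>M)"
  proof (intro nn_integral_mono)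
    fix x
    have "t \<le> g x \<Longrightarrow> 1 \<le> exp (- l * t) * exp (l * g x)"
      using assms(2) by (simp add: mult_exp_exp mult_left_mono)
    then show "indicator {x \<in> space M. t \<le> g x} x \<le> ennreal (exp (- l * t)) * ennreal (exp (l * g x))"
      by (auto simp: indicator_def ennreal_mult[symmetric] ennreal_leI)
  qed
  also have "\<dots> = ennreal (exp (- l * t)) * (\<integral>\<^sup>+x. ennreal (exp (l * g x)) \<partial>M)"
    by (rule nn_integral_cmult) measurable
  finally show ?thesis .
qed

lemma (in prob_space) prob_le_exp_mult_nn_integral:
  assumes "g \<in> borel_measurable M" and "0 \<le> l"
    and "(\<integral>\<^sup>+x. ennreal (exp (l * g x)) \<partial>M) = ennreal E" and "0 \<le> E"
  shows "prob {x \<in> space M. t \<le> g x} \<le> exp (- l * t) * E"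
  using emeasure_le_exp_mult_nn_integral[OF assms(1,2), of t] assms(3,4)
  by (simp add: emeasure_eq_measure ennreal_mult[symmetric])

lemma prob_std_gaussian_inner_nonneg:
  fixes s :: "'a::euclidean_space"
  shows "1/2 \<le> measure std_gaussian {x. 0 \<le> x \<bullet> s}"
proof -
  have "(\<lambda>x. indicator {x. x \<bullet> s \<le> 0} (- x)) = (indicator {x. 0 \<le> x \<bullet> s} :: _ \<Rightarrow> ennreal)"
    by (auto simp: indicator_def)
  then have "emeasure std_gaussian {x. x \<bullet> s \<le> 0} = emeasure std_gaussian {x. 0 \<le> x \<bullet> s}"
    using nn_integral_std_gaussian_uminus[of "indicator {x. x \<bullet> s \<le> 0}"]
    by (simp add: nn_integral_indicator)
  then have "measure std_gaussian {x. x \<bullet> s \<le> 0} = measure std_gaussian {x. 0 \<le> x \<bullet> s}"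
    by (simp add: std_gaussian.emeasure_eq_measure)
  moreover have "1 \<le> measure std_gaussian {x. 0 \<le> x \<bullet> s} + measure std_gaussian {x. x \<bullet> s \<le> 0}"
  proof -
    have "{x. 0 \<le> x \<bullet> s} \<union> {x. x \<bullet> s \<le> 0} = UNIV"
      by auto
    then show ?thesis
      using measure_Un_le[of "{x. 0 \<le> x \<bullet> s}" std_gaussian "{x. x \<bullet> s \<le> 0}"]
        std_gaussian.prob_space[where 'a='a]
      by simp
  qed
  ultimately show ?thesis
    by simp
qed

lemma prob_std_gaussian_inner_upper_tail:
  assumes "norm s = 1"
  shows "measure std_gaussian {x. 2 \<le> x \<bullet> s} \<le> exp (-2)"
proof -
  have "(\<integral>\<^sup>+x. ennreal (exp (2 * (x \<bullet> s))) \<partial>std_gaussian) = ennreal (exp 2)"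
    using nn_integral_std_gaussian_exp_inner[of "2 *\<^sub>R s"] assms by simp
  then have "measure std_gaussian {x. 2 \<le> x \<bullet> s} \<le> exp (- 2 * 2) * exp 2"
    using std_gaussian.prob_le_exp_mult_nn_integral[of "\<lambda>x. x \<bullet> s" 2 "exp 2" 2] by simp
  then show ?thesis
    by (simp add: mult_exp_exp)
qed

lemma prob_std_gaussian_inner_strip:
  assumes "norm s = 1"
  shows "1/4 \<le> measure std_gaussian {x. 0 \<le> x \<bullet> s \<and> x \<bullet> s \<le> 2}"
proof -
  have "{x. 0 \<le> x \<bullet> s} \<subseteq> {x. 0 \<le> x \<bullet> s \<and> x \<bullet> s \<le> 2} \<union> {x. 2 \<le> x \<bullet> s}"
    by auto
  then have "measure std_gaussian {x. 0 \<le> x \<bullet> s}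
      \<le> measure std_gaussian {x. 0 \<le> x \<bullet> s \<and> x \<bullet> s \<le> 2} + measure std_gaussian {x. 2 \<le> x \<bullet> s}"
    by (intro order.trans[OF std_gaussian.finite_measure_mono measure_Un_le]) auto
  then show ?thesis
    using prob_std_gaussian_inner_nonneg[of s] prob_std_gaussian_inner_upper_tail[OF assms]
      exp_neg_two_le_quarter
    by linarith
qed

lemma prob_std_gaussian_norm_sq_lower_tail:
  assumes "2 \<le> a" and dim: "real DIM('a) = a\<^sup>2"
  shows "measure (std_gaussian :: 'a::euclidean_space measure) {x. (norm x)\<^sup>2 \<le> a\<^sup>2 - 4 * a} \<le> exp (-2)"
proof -
  define l where "l = 2 / a"
  have l: "0 \<le> l" "l \<le> 1"
    using assms(1) by (auto simp: l_def)
  have "(\<integral>\<^sup>+x. ennreal (exp (l * (- (norm x)\<^sup>2 / 2))) \<partial>(std_gaussian :: 'a measure))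
      = ennreal ((1 + l) powr (- a\<^sup>2 / 2))"
    using nn_integral_std_gaussian_exp_norm[where 'a='a, of "- l"] l by (simp add: dim)
  then have "measure std_gaussian {x \<in> space (std_gaussian :: 'a measure). - (a\<^sup>2 - 4 * a) / 2 \<le> - (norm x)\<^sup>2 / 2}
      \<le> exp (- l * (- (a\<^sup>2 - 4 * a) / 2)) * (1 + l) powr (- a\<^sup>2 / 2)"
    by (intro std_gaussian.prob_le_exp_mult_nn_integral l) auto
  moreover have "{x \<in> space std_gaussian. - (a\<^sup>2 - 4 * a) / 2 \<le> - (norm x)\<^sup>2 / 2}
      = {x::'a. (norm x)\<^sup>2 \<le> a\<^sup>2 - 4 * a}"
    by auto
  ultimately have "measure std_gaussian {x::'a. (norm x)\<^sup>2 \<le> a\<^sup>2 - 4 * a}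
      \<le> exp (- l * (- (a\<^sup>2 - 4 * a) / 2)) * (1 + l) powr (- a\<^sup>2 / 2)"
    by simp
  also have "\<dots> = exp (l * (a\<^sup>2 - 4 * a) / 2 - a\<^sup>2 / 2 * ln (1 + l))"
    using l by (simp add: powr_def mult_exp_exp algebra_simps)
  also have "\<dots> \<le> exp (l * (a\<^sup>2 - 4 * a) / 2 - a\<^sup>2 / 2 * (l - l\<^sup>2))"
    using ln_one_plus_pos_lower_bound[OF l] by (simp add: mult_left_mono)
  also have "l * (a\<^sup>2 - 4 * a) / 2 - a\<^sup>2 / 2 * (l - l\<^sup>2) = -2"
    using assms(1) by (simp add: l_def field_simps power2_eq_square)
  finally show ?thesis
    by simp
qed

lemma prob_std_gaussian_norm_sq_upper_tail:
  assumes "3 \<le> a" and dim: "real DIM('a) = a\<^sup>2"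
  shows "measure (std_gaussian :: 'a::euclidean_space measure) {x. a\<^sup>2 + 6 * a \<le> (norm x)\<^sup>2} \<le> exp (-9/4)"
proof -
  define l where "l = 3 / (2 * a)"
  have l: "0 \<le> l" "l \<le> 1/2"
    using assms(1) by (auto simp: l_def)
  have "(\<integral>\<^sup>+x. ennreal (exp (l * ((norm x)\<^sup>2 / 2))) \<partial>(std_gaussian :: 'a measure))
      = ennreal ((1 - l) powr (- a\<^sup>2 / 2))"
    using nn_integral_std_gaussian_exp_norm[where 'a='a, of l] l by (simp add: dim)
  then have "measure std_gaussian {x \<in> space (std_gaussian :: 'a measure). (a\<^sup>2 + 6 * a) / 2 \<le> (norm x)\<^sup>2 / 2}
      \<le> exp (- l * ((a\<^sup>2 + 6 * a) / 2)) * (1 - l) powr (- a\<^sup>2 / 2)"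
    by (intro std_gaussian.prob_le_exp_mult_nn_integral l) auto
  moreover have "{x \<in> space std_gaussian. (a\<^sup>2 + 6 * a) / 2 \<le> (norm x)\<^sup>2 / 2}
      = {x::'a. a\<^sup>2 + 6 * a \<le> (norm x)\<^sup>2}"
    by auto
  ultimately have "measure std_gaussian {x::'a. a\<^sup>2 + 6 * a \<le> (norm x)\<^sup>2}
      \<le> exp (- l * ((a\<^sup>2 + 6 * a) / 2)) * (1 - l) powr (- a\<^sup>2 / 2)"
    by simp
  also have "\<dots> = exp (- l * (a\<^sup>2 + 6 * a) / 2 - a\<^sup>2 / 2 * ln (1 - l))"
    using l by (simp add: powr_def mult_exp_exp)
  also have "\<dots> \<le> exp (- l * (a\<^sup>2 + 6 * a) / 2 + a\<^sup>2 / 2 * (l + 2 * l\<^sup>2))"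
  proof -
    have "a\<^sup>2 / 2 * (- ln (1 - l)) \<le> a\<^sup>2 / 2 * (l + 2 * l\<^sup>2)"
      using ln_one_minus_pos_lower_bound[OF l] by (intro mult_left_mono) auto
    then show ?thesis
      by simp
  qed
  also have "- l * (a\<^sup>2 + 6 * a) / 2 + a\<^sup>2 / 2 * (l + 2 * l\<^sup>2) = -9/4"
    using assms(1) by (simp add: l_def field_simps power2_eq_square)
  finally show ?thesis
    by simp
qed

lemma prob_std_gaussian_norm_sq_bulk:
  assumes "3 \<le> a" and dim: "real DIM('a) = a\<^sup>2"
  shows "1/2 \<le> measure (std_gaussian :: 'a::euclidean_space measure)
           {x. a\<^sup>2 - 4 * a < (norm x)\<^sup>2 \<and> (norm x)\<^sup>2 < a\<^sup>2 + 6 * a}"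
proof -
  let ?L = "{x::'a. (norm x)\<^sup>2 \<le> a\<^sup>2 - 4 * a}"
  let ?W = "{x::'a. a\<^sup>2 - 4 * a < (norm x)\<^sup>2 \<and> (norm x)\<^sup>2 < a\<^sup>2 + 6 * a}"
  let ?U = "{x::'a. a\<^sup>2 + 6 * a \<le> (norm x)\<^sup>2}"
  have "UNIV = ?L \<union> ?W \<union> ?U"
    by auto
  then have "1 \<le> measure std_gaussian (?L \<union> ?W) + measure std_gaussian ?U"
    using measure_Un_le[of "?L \<union> ?W" std_gaussian ?U] std_gaussian.prob_space[where 'a='a] by simp
  also have "\<dots> \<le> measure std_gaussian ?L + measure std_gaussian ?W + measure std_gaussian ?U"
    using measure_Un_le[of ?L std_gaussian ?W] by simp
  finally show ?thesis
    using prob_std_gaussian_norm_sq_lower_tail[OF _ dim] prob_std_gaussian_norm_sq_upper_tail[OF _ dim] assms(1)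
      exp_neg_two_le_quarter exp_le_cancel_iff[of "-9/4" "-2::real"]
    by linarith
qed

section \<open>Mass outside a sphere\<close>

lemma prob_std_gaussian_norm_sq_ge_via_shift:
  fixes \<rho> :: real
  assumes "0 \<le> \<rho>"
  shows "exp (- \<rho>\<^sup>2 / 2 - 2 * \<rho>) / 4 \<le> measure (std_gaussian :: 'a::euclidean_space measure) {x. \<rho>\<^sup>2 \<le> (norm x)\<^sup>2}"
proof -
  obtain s :: 'a where s: "norm s = 1"
    using nonempty_Basis norm_Basis by blast
  define c where "c = \<rho> *\<^sub>R s"
  define K where "K = exp (- \<rho>\<^sup>2 / 2 - 2 * \<rho>)"
  let ?strip = "{x::'a. 0 \<le> x \<bullet> s \<and> x \<bullet> s \<le> 2}"
  have "ennreal K * emeasure std_gaussian ?strip = (\<integral>\<^sup>+x. ennreal K * indicator ?strip x \<partial>std_gaussian)"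
    by (simp add: nn_integral_cmult_indicator)
  also have "\<dots> \<le> (\<integral>\<^sup>+x. ennreal (exp (- (x \<bullet> c) - (norm c)\<^sup>2 / 2))
      * indicator {x. \<rho>\<^sup>2 \<le> (norm x)\<^sup>2} (x + c) \<partial>std_gaussian)"
  proof (intro nn_integral_mono)
    fix x :: 'a
    show "ennreal K * indicator ?strip x
        \<le> ennreal (exp (- (x \<bullet> c) - (norm c)\<^sup>2 / 2)) * indicator {x. \<rho>\<^sup>2 \<le> (norm x)\<^sup>2} (x + c)"
    proof (cases "x \<in> ?strip")
      case True
      have "\<rho> * (x \<bullet> s) \<le> \<rho> * 2"
        using True assms by (intro mult_left_mono) auto
      then have "K \<le> exp (- (x \<bullet> c) - (norm c)\<^sup>2 / 2)"
        using s assms by (simp add: K_def c_def)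
      moreover have "\<rho> \<le> norm (x + c)"
        using True s assms Cauchy_Schwarz_ineq2[of "x + c" s]
        by (simp add: c_def inner_add_left power2_norm_eq_inner[symmetric])
      then have "\<rho>\<^sup>2 \<le> (norm (x + c))\<^sup>2"
        using assms by (intro power_mono) auto
      ultimately show ?thesis
        using True by (simp add: ennreal_leI)
    qed simp
  qed
  also have "\<dots> = emeasure std_gaussian {x::'a. \<rho>\<^sup>2 \<le> (norm x)\<^sup>2}"
    by (simp flip: nn_integral_std_gaussian_shift nn_integral_indicator)
  finally have "K * measure std_gaussian ?strip \<le> measure std_gaussian {x::'a. \<rho>\<^sup>2 \<le> (norm x)\<^sup>2}"
    by (simp add: std_gaussian.emeasure_eq_measure K_def ennreal_mult[symmetric])
  moreover have "K * (1/4) \<le> K * measure std_gaussian ?strip"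
    using prob_std_gaussian_inner_strip[OF s] by (intro mult_left_mono) (simp_all add: K_def)
  ultimately show ?thesis
    unfolding K_def by linarith
qed

lemma prob_std_gaussian_norm_sq_ge_via_dilation:
  assumes "4 < a" and dim: "real DIM('a) = a\<^sup>2" and R: "a\<^sup>2 - 4 * a \<le> R"
  shows "(R / (a\<^sup>2 - 4 * a)) powr (a\<^sup>2 / 2) * exp (- (R / (a\<^sup>2 - 4 * a) - 1) * (a\<^sup>2 + 6 * a) / 2) / 2
       \<le> measure (std_gaussian :: 'a::euclidean_space measure) {x. R \<le> (norm x)\<^sup>2}"
proof -
  define m where "m = a\<^sup>2 - 4 * a"
  define M where "M = a\<^sup>2 + 6 * a"
  define c where "c = sqrt (R / m)"
  define K where "K = c ^ DIM('a) * exp (- (c\<^sup>2 - 1) * M / 2)"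
  let ?W = "{x::'a. m < (norm x)\<^sup>2 \<and> (norm x)\<^sup>2 < M}"
  have m: "0 < m" "m \<le> R"
    using assms by (auto simp: m_def power2_eq_square)
  have c: "0 < c" "c\<^sup>2 = R / m" "1 \<le> c\<^sup>2"
    using m by (auto simp: c_def)
  have K: "0 \<le> K"
    using c by (simp add: K_def)
  have "ennreal K * emeasure std_gaussian ?W = (\<integral>\<^sup>+x. ennreal K * indicator ?W x \<partial>std_gaussian)"
    by (simp add: nn_integral_cmult_indicator)
  also have "\<dots> \<le> (\<integral>\<^sup>+x. ennreal (c ^ DIM('a) * exp (- (c\<^sup>2 - 1) * (norm (x::'a))\<^sup>2 / 2))
      * indicator {x. R \<le> (norm x)\<^sup>2} (c *\<^sub>R x) \<partial>std_gaussian)"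
  proof (intro nn_integral_mono)
    fix x :: 'a
    show "ennreal K * indicator ?W x
        \<le> ennreal (c ^ DIM('a) * exp (- (c\<^sup>2 - 1) * (norm x)\<^sup>2 / 2))
          * indicator {x. R \<le> (norm x)\<^sup>2} (c *\<^sub>R x)"
    proof (cases "x \<in> ?W")
      case True
      have "(c\<^sup>2 - 1) * (norm x)\<^sup>2 \<le> (c\<^sup>2 - 1) * M"
        using True c by (intro mult_left_mono) auto
      then have "exp (- (c\<^sup>2 - 1) * M / 2) \<le> exp (- (c\<^sup>2 - 1) * (norm x)\<^sup>2 / 2)"
        unfolding exp_le_cancel_iff by linarith
      then have "K \<le> c ^ DIM('a) * exp (- (c\<^sup>2 - 1) * (norm x)\<^sup>2 / 2)"
        using c(1) unfolding K_def by (intro mult_left_mono) auto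
      moreover have "R \<le> (norm (c *\<^sub>R x))\<^sup>2"
      proof -
        have "R = c\<^sup>2 * m"
          using c m by simp
        also have "\<dots> \<le> c\<^sup>2 * (norm x)\<^sup>2"
          using True by (intro mult_left_mono) auto
        finally show ?thesis
          using c by (simp add: power_mult_distrib)
      qed
      ultimately show ?thesis
        using True by (simp add: ennreal_leI)
    qed simp
  qed
  also have "\<dots> = emeasure std_gaussian {x::'a. R \<le> (norm x)\<^sup>2}"
    using nn_integral_std_gaussian_dilation[of "indicator {x::'a. R \<le> (norm x)\<^sup>2}" c] c(1)
    by simp
  finally have "K * measure std_gaussian ?W \<le> measure std_gaussian {x::'a. R \<le> (norm x)\<^sup>2}"
    using K by (simp add: std_gaussian.emeasure_eq_measure ennreal_mult[symmetric])
  moreover have "K * (1/2) \<le> K * measure std_gaussian ?W"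
    using prob_std_gaussian_norm_sq_bulk[OF _ dim] assms(1) K
    by (intro mult_left_mono) (simp_all add: m_def M_def)
  moreover have "c ^ DIM('a) = (R / m) powr (a\<^sup>2 / 2)"
    using m by (simp add: c_def dim powr_half_sqrt[symmetric] powr_powr flip: powr_realpow)
  ultimately show ?thesis
    using c by (simp add: K_def m_def M_def)
qed

lemma ln_add_one_ge:
  fixes x :: real
  assumes "0 \<le> x"
  shows "x - x\<^sup>2 / 2 \<le> ln (1 + x)"
proof -
  define f where "f y = ln (1 + y) - y + y\<^sup>2 / 2" for y :: real
  have "f 0 \<le> f x"
  proof (rule DERIV_nonneg_imp_increasing_open[OF assms])
    fix y :: real
    assume y: "0 < y" "y < x"
    have "(f has_real_derivative y\<^sup>2 / (1 + y)) (at y)"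
      unfolding f_def using y
      by (auto intro!: derivative_eq_intros simp: field_simps power2_eq_square)
    then show "\<exists>d. (f has_real_derivative d) (at y) \<and> 0 \<le> d"
      using y by auto
  next
    show "continuous_on {0..x} f"
      unfolding f_def by (intro continuous_intros) auto
  qed
  then show ?thesis
    by (simp add: f_def)
qed

lemma dilation_exponent_ge:
  fixes a b :: real
  assumes b: "8 < b\<^sup>2" "0 \<le> b" and ab: "4 * b < a"
  defines "\<delta> \<equiv> (a\<^sup>2 + 2 * a * b + 2 * b\<^sup>2) / (a\<^sup>2 - 4 * a) - 1"
  shows "- 24 * b\<^sup>2 \<le> a\<^sup>2 / 2 * (\<delta> - \<delta>\<^sup>2 / 2) - \<delta> * (a\<^sup>2 + 6 * a) / 2"
proof -
  have "(21/8)\<^sup>2 \<le> b\<^sup>2"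
    using b(1) by (simp add: power2_eq_square)
  then have b_ge: "21/8 \<le> b"
    using b(2) by (rule power2_le_imp_le)
  then have a_gt: "4 < a"
    using ab by linarith
  define u where "u = a * \<delta>"
  have u_eq: "u = (2 * a * b + 2 * b\<^sup>2 + 4 * a) / (a - 4)"
    using a_gt by (simp add: u_def \<delta>_def field_simps power2_eq_square)
  have "2 * a * b + 2 * b\<^sup>2 + 4 * a \<le> 13/2 * b * (a - 4)"
  proof -
    have "4 * b * (9/2 * b - 4) \<le> a * (9/2 * b - 4)"
      using ab b_ge by (intro mult_right_mono) auto
    moreover have "0 \<le> b * (16 * b - 42)"
      using b_ge by simp
    ultimately show ?thesis
      by (simp add: algebra_simps power2_eq_square)
  qed
  then have u: "0 \<le> u" "u \<le> 13/2 * b"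
    using a_gt b by (simp_all add: u_eq divide_le_eq mult_ac)
  then have "u\<^sup>2 \<le> (13/2 * b)\<^sup>2"
    by (intro power_mono) auto
  then have "u\<^sup>2 \<le> 169/4 * b\<^sup>2"
    by (simp add: power_mult_distrib power_divide)
  moreover have "a\<^sup>2 / 2 * (\<delta> - \<delta>\<^sup>2 / 2) - \<delta> * (a\<^sup>2 + 6 * a) / 2 = - u\<^sup>2 / 4 - 3 * u"
    by (simp add: u_def power2_eq_square field_simps)
  moreover have "39/2 * b \<le> 215/16 * b\<^sup>2"
    using b_ge by (simp add: power2_eq_square)
  ultimately show ?thesis
    using u by linarith
qed

lemma prob_std_gaussian_norm_sq_ge_radius_low_dim:
  assumes "8 < \<alpha>" and r: "r\<^sup>2 = real DIM('a) + 2 * sqrt (\<alpha> * real DIM('a)) + 2 * \<alpha>"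
    and low: "real DIM('a) \<le> 16 * \<alpha>"
  shows "exp (- 24 * \<alpha>) / 2 \<le> measure (std_gaussian :: 'a::euclidean_space measure) {x. r\<^sup>2 \<le> (norm x)\<^sup>2}"
proof -
  have "2 * exp (- 24 * \<alpha>) \<le> exp 1 * exp (- 24 * \<alpha>)"
    using exp_ge_add_one_self[of 1] by (intro mult_right_mono) auto
  then have two_exp: "2 * exp (- 24 * \<alpha>) \<le> exp (1 - 24 * \<alpha>)"
    by (simp add: mult_exp_exp)
  define \<rho> where "\<rho> = \<bar>r\<bar>"
  have \<rho>: "0 \<le> \<rho>" "\<rho>\<^sup>2 = r\<^sup>2"
    by (simp_all add: \<rho>_def)
  have "\<alpha> * real DIM('a) \<le> (4 * \<alpha>)\<^sup>2"
    using assms(1) mult_left_mono[OF low, of \<alpha>] by (simp add: power2_eq_square)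
  then have "sqrt (\<alpha> * real DIM('a)) \<le> sqrt ((4 * \<alpha>)\<^sup>2)"
    by (rule real_sqrt_le_mono)
  moreover have "sqrt ((4 * \<alpha>)\<^sup>2) = 4 * \<alpha>"
    using assms(1) by (subst real_sqrt_abs) simp
  ultimately have "sqrt (\<alpha> * real DIM('a)) \<le> 4 * \<alpha>"
    by linarith
  then have "\<rho>\<^sup>2 \<le> 26 * \<alpha>"
    using low assms(1) r \<rho> by simp
  moreover have "2 * \<rho> \<le> \<rho>\<^sup>2 / 4 + 4"
    using zero_le_power2[of "\<rho> / 2 - 2"] by (simp add: power2_eq_square field_simps)
  ultimately have "1 - 24 * \<alpha> \<le> - \<rho>\<^sup>2 / 2 - 2 * \<rho>"
    using assms(1) by linarith
  then have "exp (1 - 24 * \<alpha>) \<le> exp (- \<rho>\<^sup>2 / 2 - 2 * \<rho>)"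
    by simp
  then have "exp (- 24 * \<alpha>) / 2 \<le> exp (- \<rho>\<^sup>2 / 2 - 2 * \<rho>) / 4"
    using two_exp by linarith
  also have "\<dots> \<le> measure std_gaussian {x::'a. r\<^sup>2 \<le> (norm x)\<^sup>2}"
    using prob_std_gaussian_norm_sq_ge_via_shift[OF \<rho>(1)] by (simp add: \<rho>)
  finally show ?thesis .
qed

lemma prob_std_gaussian_norm_sq_ge_radius_high_dim:
  assumes "8 < \<alpha>" and r: "r\<^sup>2 = real DIM('a) + 2 * sqrt (\<alpha> * real DIM('a)) + 2 * \<alpha>"
    and high: "16 * \<alpha> < real DIM('a)"
  shows "exp (- 24 * \<alpha>) / 2 \<le> measure (std_gaussian :: 'a::euclidean_space measure) {x. r\<^sup>2 \<le> (norm x)\<^sup>2}"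
proof -
  define a where "a = sqrt (real DIM('a))"
  define b where "b = sqrt \<alpha>"
  have dim: "real DIM('a) = a\<^sup>2" and \<alpha>: "\<alpha> = b\<^sup>2" "0 \<le> b"
    using assms(1) by (simp_all add: a_def b_def)
  have "sqrt (16 * \<alpha>) < a"
    using high by (simp add: a_def real_sqrt_less_mono)
  then have ab: "4 * b < a"
    by (simp add: b_def real_sqrt_mult)
  have "sqrt (\<alpha> * real DIM('a)) = a * b"
    by (simp add: a_def b_def real_sqrt_mult mult.commute)
  then have r_ab: "r\<^sup>2 = a\<^sup>2 + 2 * a * b + 2 * b\<^sup>2"
    using r by (simp add: dim \<alpha>(1))
  define \<delta> where "\<delta> = r\<^sup>2 / (a\<^sup>2 - 4 * a) - 1"
  have "2\<^sup>2 \<le> b\<^sup>2"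
    using assms(1) \<alpha>(1) by simp
  then have "2 \<le> b"
    using \<alpha>(2) by (rule power2_le_imp_le)
  then have a: "4 < a" "0 < a\<^sup>2 - 4 * a"
    using ab by (auto simp: power2_eq_square)
  have R: "a\<^sup>2 - 4 * a \<le> r\<^sup>2"
    using r_ab a(1) \<alpha>(2) mult_nonneg_nonneg[of a b] zero_le_power2[of b] by linarith
  then have \<delta>: "0 \<le> \<delta>"
    using a by (simp add: \<delta>_def)
  have "8 < b\<^sup>2"
    using assms(1) \<alpha>(1) by simp
  from dilation_exponent_ge[OF this \<alpha>(2) ab]
  have "- 24 * \<alpha> \<le> a\<^sup>2 / 2 * (\<delta> - \<delta>\<^sup>2 / 2) - \<delta> * (a\<^sup>2 + 6 * a) / 2"
    by (simp only: \<delta>_def r_ab \<alpha>(1))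
  then have "exp (- 24 * \<alpha>) \<le> exp (a\<^sup>2 / 2 * (\<delta> - \<delta>\<^sup>2 / 2) - \<delta> * (a\<^sup>2 + 6 * a) / 2)"
    by simp
  also have "\<dots> \<le> exp (a\<^sup>2 / 2 * ln (1 + \<delta>) - \<delta> * (a\<^sup>2 + 6 * a) / 2)"
    using ln_add_one_ge[OF \<delta>] by (simp add: mult_left_mono)
  also have "\<dots> = (1 + \<delta>) powr (a\<^sup>2 / 2) * exp (- \<delta> * (a\<^sup>2 + 6 * a) / 2)"
    using \<delta> by (simp add: powr_def mult_exp_exp mult.commute)
  finally have "exp (- 24 * \<alpha>) / 2
      \<le> (r\<^sup>2 / (a\<^sup>2 - 4 * a)) powr (a\<^sup>2 / 2) * exp (- (r\<^sup>2 / (a\<^sup>2 - 4 * a) - 1) * (a\<^sup>2 + 6 * a) / 2) / 2"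
    by (simp add: \<delta>_def divide_right_mono)
  also have "\<dots> \<le> measure std_gaussian {x::'a. r\<^sup>2 \<le> (norm x)\<^sup>2}"
    by (rule prob_std_gaussian_norm_sq_ge_via_dilation[OF a(1) dim R])
  finally show ?thesis .
qed

lemma prob_std_gaussian_norm_sq_ge_radius:
  assumes "8 < \<alpha>" and "r\<^sup>2 = real DIM('a) + 2 * sqrt (\<alpha> * real DIM('a)) + 2 * \<alpha>"
  shows "exp (- 24 * \<alpha>) / 2 \<le> measure (std_gaussian :: 'a::euclidean_space measure) {x. r\<^sup>2 \<le> (norm x)\<^sup>2}"
  using prob_std_gaussian_norm_sq_ge_radius_low_dim[OF assms] prob_std_gaussian_norm_sq_ge_radius_high_dim[OF assms]
  by fastforce

section \<open>Tail moments of a linear functional\<close>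

lemma powr_le_exp_mult:
  fixes y \<mu> p :: real
  assumes "0 < y" "0 < \<mu>" "0 < p"
  shows "y powr p \<le> (p / (exp 1 * \<mu>)) powr p * exp (\<mu> * y)"
proof -
  have "ln (\<mu> * y / p) \<le> \<mu> * y / p - 1"
    using assms by (intro ln_le_minus_one) simp
  then have "p * ln (\<mu> * y / p) \<le> p * (\<mu> * y / p - 1)"
    by (rule mult_left_mono) (use assms(3) in simp)
  then have "p * ln y \<le> p * ln (p / (exp 1 * \<mu>)) + \<mu> * y"
    using assms by (simp add: ln_div ln_mult algebra_simps)
  then show ?thesis
    using assms by (simp add: powr_def mult_exp_exp)
qed

lemma abs_powr_le_exp_abs:
  fixes y p t :: real
  assumes p: "1 \<le> p" and t: "0 < t" "t < y\<^sup>2"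
  defines "\<beta> \<equiv> sqrt p / 2 + 3 * sqrt t / 4"
  shows "\<bar>y\<bar> powr p \<le> (2 * sqrt p / exp 1) powr p * exp (- 3 * t / 4) * exp (\<beta> * \<bar>y\<bar>)"
proof -
  have y: "sqrt t < \<bar>y\<bar>"
    using t real_sqrt_less_mono[OF t(2)] by simp
  then have "y \<noteq> 0"
    using t(1) by auto
  have "p / (exp 1 * (sqrt p / 2)) = 2 * sqrt p / exp 1"
    using p by (simp add: field_simps flip: real_sqrt_mult)
  then have "\<bar>y\<bar> powr p \<le> (2 * sqrt p / exp 1) powr p * exp (sqrt p / 2 * \<bar>y\<bar>)"
    using powr_le_exp_mult[of "\<bar>y\<bar>" "sqrt p / 2" p] \<open>y \<noteq> 0\<close> p by simp
  also have "\<dots> \<le> (2 * sqrt p / exp 1) powr p * (exp (- 3 * t / 4) * exp (\<beta> * \<bar>y\<bar>))"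
  proof (intro mult_left_mono)
    have "sqrt t * sqrt t \<le> sqrt t * \<bar>y\<bar>"
      using y t(1) by (intro mult_left_mono) auto
    then have "sqrt p / 2 * \<bar>y\<bar> \<le> - 3 * t / 4 + \<beta> * \<bar>y\<bar>"
      using t(1) by (simp add: \<beta>_def algebra_simps)
    then show "exp (sqrt p / 2 * \<bar>y\<bar>) \<le> exp (- 3 * t / 4) * exp (\<beta> * \<bar>y\<bar>)"
      by (simp add: mult_exp_exp)
  qed simp
  finally show ?thesis
    by (simp add: mult.assoc)
qed

lemma gaussian_tail_constant_le:
  fixes p t :: real
  assumes p: "1 \<le> p" and t: "0 < t"
  defines "\<beta> \<equiv> sqrt p / 2 + 3 * sqrt t / 4"
  shows "(2 * sqrt p / exp 1) powr p * exp (\<beta>\<^sup>2 / 2 - 3 * t / 4) \<le> (2 * p) powr (p / 2) * exp (- 3 * t / 8)"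
proof -
  have "p + 3 * t / 4 - \<beta>\<^sup>2 = 3/4 * (sqrt p - sqrt t / 2)\<^sup>2"
    using p t by (simp add: \<beta>_def power2_eq_square algebra_simps)
  moreover have "0 \<le> 3/4 * (sqrt p - sqrt t / 2)\<^sup>2"
    by simp
  ultimately have "\<beta>\<^sup>2 / 2 - 3 * t / 4 \<le> p / 2 - 3 * t / 8"
    by linarith
  then have "(2 * sqrt p / exp 1) powr p * exp (\<beta>\<^sup>2 / 2 - 3 * t / 4)
      \<le> (2 * sqrt p / exp 1) powr p * exp (1 / 2) powr p * exp (- 3 * t / 8)"
    by (simp add: powr_def mult_exp_exp mult.assoc)
  also have "\<dots> = (2 * sqrt p / exp (1 / 2)) powr p * exp (- 3 * t / 8)"
  proof -
    have "exp (1::real) = exp (1 / 2) * exp (1 / 2)"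
      by (simp flip: exp_add)
    then have "2 * sqrt p / exp 1 * exp (1 / 2) = 2 * sqrt p / exp (1 / 2)"
      by simp
    then show ?thesis
      by (simp flip: powr_mult)
  qed
  also have "\<dots> \<le> sqrt (2 * p) powr p * exp (- 3 * t / 8)"
  proof -
    have "4 \<le> 2 * exp (1::real)"
      using exp_ge_add_one_self[of 1] by simp
    also have "\<dots> = (sqrt 2 * exp (1 / 2))\<^sup>2"
      by (simp add: power_mult_distrib flip: exp_double)
    finally have "2 \<le> sqrt 2 * exp (1 / 2)"
      by (rule power2_le_imp_le[of 2, simplified]) simp
    then have "2 * sqrt p / exp (1 / 2) \<le> sqrt (2 * p)"
      using p by (simp add: divide_le_eq real_sqrt_mult mult_right_mono mult.commute)
    then show ?thesis
      using p by (intro mult_right_mono powr_mono2) auto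
  qed
  also have "sqrt (2 * p) powr p = (2 * p) powr (p / 2)"
    using p by (simp add: powr_half_sqrt[symmetric] powr_powr)
  finally show ?thesis .
qed

lemma nn_integral_std_gaussian_inner_powr_tail:
  fixes s :: "'a::euclidean_space"
  assumes s: "norm s = 1" and p: "1 \<le> p" and t: "0 < t"
  shows "(\<integral>\<^sup>+x. ennreal (\<bar>x \<bullet> s\<bar> powr p * indicator {x. t < (x \<bullet> s)\<^sup>2} x) \<partial>std_gaussian)
       \<le> ennreal (2 * (2 * p) powr (p / 2) * exp (- 3 * t / 8))"
proof -
  define \<beta> where "\<beta> = sqrt p / 2 + 3 * sqrt t / 4"
  define K where "K = (2 * sqrt p / exp 1) powr p * exp (- 3 * t / 4)"
  have K: "0 \<le> K"
    by (simp add: K_def)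
  have mgf: "(\<integral>\<^sup>+x. ennreal (exp (c * (x \<bullet> s))) \<partial>std_gaussian) = ennreal (exp (c\<^sup>2 / 2))" for c
    using nn_integral_std_gaussian_exp_inner[of "c *\<^sub>R s"] s by simp
  have "(\<integral>\<^sup>+x. ennreal (\<bar>x \<bullet> s\<bar> powr p * indicator {x. t < (x \<bullet> s)\<^sup>2} x) \<partial>std_gaussian)
      \<le> (\<integral>\<^sup>+x. ennreal K * (ennreal (exp (\<beta> * (x \<bullet> s))) + ennreal (exp (- \<beta> * (x \<bullet> s)))) \<partial>std_gaussian)"
  proof (intro nn_integral_mono)
    fix x :: 'a
    have "\<bar>x \<bullet> s\<bar> powr p * indicator {x. t < (x \<bullet> s)\<^sup>2} x \<le> K * exp (\<beta> * \<bar>x \<bullet> s\<bar>)"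
      using abs_powr_le_exp_abs[OF p t, of "x \<bullet> s"]
      by (auto simp: indicator_def K_def \<beta>_def)
    also have "\<dots> \<le> K * (exp (\<beta> * (x \<bullet> s)) + exp (- \<beta> * (x \<bullet> s)))"
      using K by (intro mult_left_mono) (auto simp: abs_if add_increasing add_increasing2)
    finally show "ennreal (\<bar>x \<bullet> s\<bar> powr p * indicator {x. t < (x \<bullet> s)\<^sup>2} x)
        \<le> ennreal K * (ennreal (exp (\<beta> * (x \<bullet> s))) + ennreal (exp (- \<beta> * (x \<bullet> s))))"
      using K by (simp add: ennreal_mult[symmetric] ennreal_leI del: ennreal_plus flip: ennreal_plus)
  qed
  also have "\<dots> = ennreal K * (ennreal (exp (\<beta>\<^sup>2 / 2)) + ennreal (exp (\<beta>\<^sup>2 / 2)))"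
    using mgf[of \<beta>] mgf[of "- \<beta>"] by (simp add: nn_integral_cmult nn_integral_add)
  also have "\<dots> = ennreal (2 * (K * exp (\<beta>\<^sup>2 / 2)))"
    using K by (simp add: ennreal_mult[symmetric] flip: ennreal_plus)
  also have "\<dots> \<le> ennreal (2 * (2 * p) powr (p / 2) * exp (- 3 * t / 8))"
    using gaussian_tail_constant_le[OF p t]
    by (intro ennreal_leI) (simp add: K_def \<beta>_def mult.assoc mult_exp_exp)
  finally show ?thesis .
qed

lemma nn_integral_abs_powr_le_level_plus_tail:
  assumes [measurable]: "g \<in> borel_measurable M" "A \<in> sets M" and "0 \<le> p" "0 < t"
  shows "(\<integral>\<^sup>+x\<in>A. ennreal (\<bar>g x\<bar> powr p) \<partial>M)
       \<le> ennreal (t powr (p / 2)) * emeasure M A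
         + (\<integral>\<^sup>+x. ennreal (\<bar>g x\<bar> powr p * indicator {x. t < (g x)\<^sup>2} x) \<partial>M)"
proof -
  have "(\<integral>\<^sup>+x\<in>A. ennreal (\<bar>g x\<bar> powr p) \<partial>M)
      \<le> (\<integral>\<^sup>+x. ennreal (t powr (p / 2)) * indicator A x
          + ennreal (\<bar>g x\<bar> powr p * indicator {x. t < (g x)\<^sup>2} x) \<partial>M)"
  proof (intro nn_integral_mono)
    fix x
    have "\<bar>g x\<bar> powr p \<le> t powr (p / 2)" if "(g x)\<^sup>2 \<le> t"
    proof -
      have "\<bar>g x\<bar> \<le> sqrt t"
        using that real_sqrt_le_mono real_sqrt_abs by metis
      then have "\<bar>g x\<bar> powr p \<le> sqrt t powr p"
        using assms(3) by (intro powr_mono2) auto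
      then show ?thesis
        using assms(4) by (simp add: powr_half_sqrt[symmetric] powr_powr)
    qed
    then show "ennreal (\<bar>g x\<bar> powr p) * indicator A x
        \<le> ennreal (t powr (p / 2)) * indicator A x
          + ennreal (\<bar>g x\<bar> powr p * indicator {x. t < (g x)\<^sup>2} x)"
      by (cases "t < (g x)\<^sup>2") (auto simp: indicator_def ennreal_leI)
  qed
  also have "\<dots> = ennreal (t powr (p / 2)) * emeasure M A
      + (\<integral>\<^sup>+x. ennreal (\<bar>g x\<bar> powr p * indicator {x. t < (g x)\<^sup>2} x) \<partial>M)"
    by (simp add: nn_integral_add nn_integral_cmult_indicator)
  finally show ?thesis .
qed

lemma cond_exp_event_le:
  assumes "0 < emeasure M A" and "(\<integral>\<^sup>+x\<in>A. ennreal (f x) \<partial>M) \<le> ennreal B * emeasure M A"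
  shows "cond_exp_event M f A \<le> ennreal B"
  unfolding cond_exp_event_def
  using assms by (intro divide_le_posI_ennreal) (auto simp: mult.commute)

theorem lemmaA9:
  fixes s :: "'a::euclidean_space" and p \<alpha> r :: real
  assumes "norm s = 1" and "p \<ge> 1" and "\<alpha> > 8"
    and "r\<^sup>2 = real DIM('a) + 2 * sqrt (\<alpha> * real DIM('a)) + 2 * \<alpha>"
  shows "cond_exp_event std_gaussian (\<lambda>v. \<bar>v \<bullet> s\<bar> powr p) {v. (norm v)\<^sup>2 \<ge> r\<^sup>2}
         \<le> ennreal ((64 * \<alpha>) powr (p / 2) + 4 * (8 * \<alpha> + 2 * p) powr (p / 2))"
proof -
  define A where "A = {v::'a. r\<^sup>2 \<le> (norm v)\<^sup>2}"
  define C where "C = 4 * (2 * p) powr (p / 2)"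
  have A_ge: "ennreal (exp (- 24 * \<alpha>) / 2) \<le> emeasure std_gaussian A"
    using prob_std_gaussian_norm_sq_ge_radius[OF assms(3,4)]
    by (simp add: A_def std_gaussian.emeasure_eq_measure)
  then have A_pos: "0 < emeasure std_gaussian A"
    by (rule less_le_trans[rotated]) simp
  have "(\<integral>\<^sup>+x. ennreal (\<bar>x \<bullet> s\<bar> powr p * indicator {x. 64 * \<alpha> < (x \<bullet> s)\<^sup>2} x) \<partial>std_gaussian)
      \<le> ennreal C * ennreal (exp (- 24 * \<alpha>) / 2)"
    using nn_integral_std_gaussian_inner_powr_tail[OF assms(1,2), of "64 * \<alpha>"] assms(3)
    by (simp add: C_def ennreal_mult[symmetric] mult_ac)
  also have "\<dots> \<le> ennreal C * emeasure std_gaussian A"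
    using A_ge by (rule mult_left_mono) simp
  finally have "(\<integral>\<^sup>+x\<in>A. ennreal (\<bar>x \<bullet> s\<bar> powr p) \<partial>std_gaussian)
      \<le> ennreal ((64 * \<alpha>) powr (p / 2)) * emeasure std_gaussian A + ennreal C * emeasure std_gaussian A"
    using nn_integral_abs_powr_le_level_plus_tail[of "\<lambda>x. x \<bullet> s" std_gaussian A p "64 * \<alpha>"] assms(2,3)
    by (simp add: A_def) (meson add_left_mono order_trans)
  also have "\<dots> \<le> ennreal ((64 * \<alpha>) powr (p / 2) + 4 * (8 * \<alpha> + 2 * p) powr (p / 2)) * emeasure std_gaussian A"
  proof -
    have "C \<le> 4 * (8 * \<alpha> + 2 * p) powr (p / 2)"
      using assms(2,3) by (simp add: C_def powr_mono2)
    then show ?thesis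
      by (simp add: C_def ennreal_plus[symmetric] mult_right_mono ennreal_leI
          flip: distrib_right del: ennreal_plus)
  qed
  finally show ?thesis
    unfolding A_def[symmetric] using A_pos by (rule cond_exp_event_le[rotated])
qed

end
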